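(* Let $Q$ be upward-looking with parameter $p_0$ and mean $\mu$. Let $X_1,X_2,\dots$ be i.i.d. $\sim Q$, $S_n=\sum_{i=1}^nX_i$ and $M_n=S_n/n$. Then for any $\delta\le0.05$, $$\mathbb{P}\bigl[\exists n:\ M_n<\mu-\delta\bigr]\le\exp(-p_0\delta/4).$$
   Context: A distribution $Q$ with $\mathbb{E}[Q]=\mu$ such that $Q-\mu$ is $1$-subgaussian ($\mathbb{E}[e^{s(X-\mu)}]\le e^{s^2/2}$ for $X\sim Q$, all real $s$) is called upward-looking with parameter $p_0$ if, with $X_i$ i.i.d. $\sim Q$, $S_n=\sum_{i\le n}X_i$, $R_n(\theta)=S_n-n\theta$ and $\tau(\theta)=\inf\{n\ge1:R_n(\theta)<0\text{ or }R_n(\theta)\ge1\}$, for every $\theta<\mu$ at least one of the following holds: (a) $\mathbb{P}[R_{\tau(\theta)}(\theta)\ge1]\ge p_0$; (b) $\mathbb{E}[(X_1-\theta)\mathbf 1(X_1\ge\theta)]\ge p_0$. *)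

theory Defs
  imports "HOL-Probability.Probability"
begin

definition subgaussian_mean :: "real measure \<Rightarrow> real \<Rightarrow> bool" where
  "subgaussian_mean Q mu \<longleftrightarrow>
     prob_space Q \<and> sets Q = sets borel \<and>
     integrable Q (\<lambda>x. x) \<and> (\<integral>x. x \<partial>Q) = mu \<and>
     (\<forall>s::real. integrable Q (\<lambda>x. exp (s * (x - mu))) \<and>
                (\<integral>x. exp (s * (x - mu)) \<partial>Q) \<le> exp (s\<^sup>2 / 2))"

text \<open>Canonical i.i.d. sequence: coordinates of the infinite product measure;
  X_(i+1) is coordinate i, so S_n = sum of the first n coordinates.\<close>
definition iid_space :: "real measure \<Rightarrow> (nat \<Rightarrow> real) measure" where
  "iid_space Q = PiM UNIV (\<lambda>_. Q)"

definition walk :: "(nat \<Rightarrow> real) \<Rightarrow> real \<Rightarrow> nat \<Rightarrow> real" where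
  "walk \<omega> \<theta> n = (\<Sum>i<n. \<omega> i) - real n * \<theta>"

text \<open>Event {R_tau(theta) >= 1}: the first n >= 1 with R_n < 0 or R_n >= 1 exists
  and has R_n >= 1.\<close>
definition exits_up :: "real \<Rightarrow> (nat \<Rightarrow> real) \<Rightarrow> bool" where
  "exits_up \<theta> \<omega> \<longleftrightarrow>
     (\<exists>n\<ge>1. walk \<omega> \<theta> n \<ge> 1 \<and>
        (\<forall>m. 1 \<le> m \<and> m < n \<longrightarrow> 0 \<le> walk \<omega> \<theta> m \<and> walk \<omega> \<theta> m < 1))"

definition upward_looking :: "real measure \<Rightarrow> real \<Rightarrow> real \<Rightarrow> bool" where
  "upward_looking Q mu p0 \<longleftrightarrow>
     subgaussian_mean Q mu \<and>
     (\<forall>\<theta> < mu.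
        measure (iid_space Q) {\<omega> \<in> space (iid_space Q). exits_up \<theta> \<omega>} \<ge> p0
      \<or> (\<integral>x. (x - \<theta>) * indicator {\<theta>..} x \<partial>Q) \<ge> p0)"

end

theory Submission
  imports Defs
begin

(*
  Put theta = mu - delta and R_n = S_n - n theta, a random walk with drift delta. As Q - mu is
  1-subgaussian, E exp (-2 delta (X - theta)) <= exp (-2 delta^2 + 2 delta^2) = 1, so
  min 1 (exp (-2 delta R_n)), frozen at 1 once R has gone below 0, is a supermartingale. It
  dominates the indicator of {R has gone below 0}, and its mean after n >= 1 steps is at most
  E min 1 (exp (-2 delta (X - theta))), which condition (b) of upward-looking bounds by
  1 - p0 delta / 4. Under condition (a) one uses instead the weight that
  is 1 while R stays in [0, 1) and min 1 (exp (-2 delta R_n)) + 1 - exp (-2 delta) once R has left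
  [0, 1) upwards; at that moment R >= 1, so the weight does not jump above 1, and it is again a
  supermartingale. Its mean yields
  P (R ever < 0) + (1 - exp (-2 delta)) P (R leaves [0, 1) upwards) <= 1.
  Either way P (M_n < mu - delta for some n) <= 1 - p0 delta / 4 <= exp (- p0 delta / 4).
*)

lemma one_minus_exp_neg_ge:
  fixes x :: real
  assumes "0 \<le> x"
  shows "x / (1 + x) \<le> 1 - exp (- x)"
proof -
  have "exp (- x) \<le> 1 / (1 + x)"
    using exp_ge_add_one_self[of x] assms by (simp add: exp_minus divide_simps)
  then show ?thesis
    using assms by (simp add: field_simps)
qed

(* For 0 <= y <= K = 3 / (4 delta) the right side is at least delta y / 2; beyond K, where it is
   only at least 3 / 5, the subtracted term exp (y - K - 1) takes over. Under a subgaussian law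
   that term has tiny mean (exp_tail_le_half). *)
lemma min_one_exp_gain_ge:
  fixes \<delta> y :: real
  assumes "0 < \<delta>"
  shows "\<delta> / 2 * (max 0 y - exp (y - 3 / (4 * \<delta>) - 1)) \<le> 1 - min 1 (exp (- 2 * \<delta> * y))"
proof -
  define K where "K = 3 / (4 * \<delta>)"
  have dK: "2 * \<delta> * K = 3 / 2"
    using assms by (simp add: K_def)
  consider "y \<le> 0" | "0 < y" "y \<le> K" | "K < y"
    by linarith
  then show ?thesis
  proof cases
    case 1
    then show ?thesis
      using assms by (simp add: mult_nonpos_nonneg mult_nonneg_nonpos)
  next
    case 2
    have "2 * \<delta> * y \<le> 2 * \<delta> * K"
      using 2 assms by (intro mult_left_mono) auto
    then have x: "0 \<le> 2 * \<delta> * y" "2 * \<delta> * y \<le> 3 / 2"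
      using 2 assms dK by auto
    have "\<delta> * y / 2 \<le> 2 * \<delta> * y / (5 / 2)"
      using x by simp
    also have "\<dots> \<le> 2 * \<delta> * y / (1 + 2 * \<delta> * y)"
      using x by (intro divide_left_mono) auto
    also have "\<dots> \<le> 1 - exp (- (2 * \<delta> * y))"
      using x by (intro one_minus_exp_neg_ge)
    also have "\<dots> \<le> 1 - min 1 (exp (- 2 * \<delta> * y))"
      by simp
    finally have "\<delta> * y / 2 \<le> 1 - min 1 (exp (- 2 * \<delta> * y))" .
    moreover have "\<delta> / 2 * (max 0 y - exp (y - 3 / (4 * \<delta>) - 1)) \<le> \<delta> * y / 2"
      using 2 assms by (simp add: right_diff_distrib)
    ultimately show ?thesis
      by linarith
  next
    case 3
    have "3 / 5 \<le> 1 - exp (- (3 / 2) :: real)"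
      using one_minus_exp_neg_ge[of "3 / 2"] by simp
    also have "\<dots> \<le> 1 - exp (- (2 * \<delta> * y))"
    proof -
      have "3 / 2 < 2 * \<delta> * y"
        using mult_strict_left_mono[OF 3, of "2 * \<delta>"] assms dK by simp
      then show ?thesis
        by simp
    qed
    also have "\<dots> \<le> 1 - min 1 (exp (- 2 * \<delta> * y))"
      by simp
    finally have gain: "3 / 5 \<le> 1 - min 1 (exp (- 2 * \<delta> * y))" .
    have "y - exp (y - K - 1) \<le> K"
      using exp_ge_add_one_self[of "y - K - 1"] by simp
    moreover have "max 0 y = y"
      using 3 assms by (simp add: K_def order.strict_trans1[of 0 K y])
    ultimately have "\<delta> / 2 * (max 0 y - exp (y - K - 1)) \<le> \<delta> / 2 * K"
      using assms by (intro mult_left_mono) auto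
    also have "\<dots> = 3 / 8"
      using dK by (simp add: mult.commute)
    finally show ?thesis
      using gain by (simp add: K_def)
  qed
qed

lemma exp_tail_le_half:
  fixes \<delta> :: real
  assumes "0 < \<delta>" "\<delta> \<le> 0.05"
  shows "exp (\<delta> - 3 / (4 * \<delta>) - 1 / 2) \<le> \<delta> / 2"
proof -
  define x where "x = 3 / (4 * \<delta>)"
  have x_pos: "0 < x"
    using assms by (simp add: x_def)
  have "exp (\<delta> - 3 / (4 * \<delta>) - 1 / 2) = exp (\<delta> - 1 / 2) / exp x"
    by (simp add: x_def exp_diff)
  also have "\<dots> \<le> 1 / exp x"
    using assms by (intro divide_right_mono) auto
  also have "\<dots> \<le> 1 / (x\<^sup>2 / 2)"
    using exp_lower_Taylor_quadratic[of x] x_pos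
    by (intro divide_left_mono) (auto simp: add_pos_nonneg)
  also have "\<dots> = 32 * \<delta>\<^sup>2 / 9"
    using assms by (simp add: x_def field_simps power2_eq_square)
  also have "\<dots> \<le> \<delta> / 2"
    using assms by (simp add: power2_eq_square field_simps)
  finally show ?thesis .
qed

lemma (in prob_space) nn_integral_PiM_supermartingale:
  fixes f :: "nat \<Rightarrow> (nat \<Rightarrow> 'a) \<Rightarrow> ennreal"
  assumes meas: "\<And>n. f n \<in> borel_measurable (PiM {..<n} (\<lambda>_. M))"
    and supermartingale: "\<And>n w. k \<le> n \<Longrightarrow> (\<integral>\<^sup>+y. f (Suc n) (w(n := y)) \<partial>M) \<le> f n w"
    and "k \<le> N"
  shows "(\<integral>\<^sup>+w. f N w \<partial>PiM {..<N} (\<lambda>_. M)) \<le> (\<integral>\<^sup>+w. f k w \<partial>PiM {..<k} (\<lambda>_. M))"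
  using \<open>k \<le> N\<close>
proof (induction N rule: dec_induct)
  case (step n)
  interpret product_prob_space "\<lambda>_::nat. M" UNIV ..
  have "(\<integral>\<^sup>+w. f (Suc n) w \<partial>PiM {..<Suc n} (\<lambda>_. M))
      = (\<integral>\<^sup>+w. (\<integral>\<^sup>+y. f (Suc n) (w(n := y)) \<partial>M) \<partial>PiM {..<n} (\<lambda>_. M))"
    using meas[of "Suc n"] by (simp add: lessThan_Suc product_nn_integral_insert)
  also have "\<dots> \<le> (\<integral>\<^sup>+w. f n w \<partial>PiM {..<n} (\<lambda>_. M))"
    using step.hyps by (intro nn_integral_mono supermartingale)
  finally show ?case
    using step.IH by order
qed simp

lemma (in product_prob_space) measure_PiM_Collect_finite_support:
  assumes "finite J" "J \<subseteq> I"
    and sets: "{w \<in> space (PiM J M). P w} \<in> sets (PiM J M)"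
    and support: "\<And>w. P (restrict w J) = P w"
  shows "measure (PiM I M) {w \<in> space (PiM I M). P w} = measure (PiM J M) {w \<in> space (PiM J M). P w}"
proof -
  have "restrict w J \<in> space (PiM J M)" if "w \<in> space (PiM I M)" for w
    using that \<open>J \<subseteq> I\<close> by (auto simp: space_PiM)
  then have "{w \<in> space (PiM I M). P w} = prod_emb I M J {w \<in> space (PiM J M). P w}"
    unfolding prod_emb_def using support by (auto simp: space_PiM)
  then show ?thesis
    using emeasure_PiM_emb'[OF assms(2,1) sets] by (simp add: measure_def)
qed

lemma (in prob_space) measure_Collect_indep_vars:
  fixes X :: "'i \<Rightarrow> 'a \<Rightarrow> 'b"
  assumes indep: "indep_vars (\<lambda>_. N) X UNIV"
    and distr: "\<And>i. distr M N (X i) = D"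
    and sets: "{w \<in> space (PiM UNIV (\<lambda>_. D)). P w} \<in> sets (PiM UNIV (\<lambda>_. D))"
  shows "measure M {x \<in> space M. P (\<lambda>i. X i x)} = measure (PiM UNIV (\<lambda>_. D)) {w \<in> space (PiM UNIV (\<lambda>_. D)). P w}"
proof -
  let ?S = "{w \<in> space (PiM UNIV (\<lambda>_. D)). P w}"
  have rv: "random_variable N (X i)" for i
    using indep by (simp add: indep_vars_def)
  have rv_seq: "random_variable (PiM UNIV (\<lambda>_. N)) (\<lambda>x i. X i x)"
    using measurable_restrict[of UNIV X M "\<lambda>_. N"] rv by (simp add: restrict_UNIV)
  have law: "distr M (PiM UNIV (\<lambda>_. N)) (\<lambda>x i. X i x) = PiM UNIV (\<lambda>_. D)"
    using indep_vars_iff_distr_eq_PiM[where I=UNIV and M'="\<lambda>_. N" and X=X] rv indep by (simp add: distr restrict_UNIV)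
  have sets_D: "sets D = sets N" and space_D: "space D = space N"
    using distr[of undefined] by auto
  have "?S \<in> sets (PiM UNIV (\<lambda>_. N))"
    using sets by (simp add: sets_PiM_cong[OF refl sets_D])
  then have "measure (PiM UNIV (\<lambda>_. D)) ?S = measure M ((\<lambda>x i. X i x) -` ?S \<inter> space M)"
    unfolding law[symmetric] by (intro measure_distr rv_seq)
  also have "(\<lambda>x i. X i x) -` ?S \<inter> space M = {x \<in> space M. P (\<lambda>i. X i x)}"
    using measurable_space[OF rv] by (auto simp: space_PiM space_D)
  finally show ?thesis ..
qed

lemma (in finite_measure) measure_Collect_ex_LIMSEQ:
  assumes "\<And>n. {x \<in> space M. P n x} \<in> sets M" "\<And>n x. P n x \<Longrightarrow> P (Suc n) x"
  shows "(\<lambda>n. measure M {x \<in> space M. P n x}) \<longlonglongrightarrow> measure M {x \<in> space M. \<exists>n. P n x}"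
proof -
  have "(\<Union>n. {x \<in> space M. P n x}) = {x \<in> space M. \<exists>n. P n x}"
    by auto
  then show ?thesis
    using finite_Lim_measure_incseq[of "\<lambda>n. {x \<in> space M. P n x}"] assms
    by (auto simp: incseq_Suc_iff)
qed

definition hits_below :: "real \<Rightarrow> nat \<Rightarrow> (nat \<Rightarrow> real) \<Rightarrow> bool" where
  "hits_below \<theta> n w \<longleftrightarrow> (\<exists>m. 1 \<le> m \<and> m \<le> n \<and> walk w \<theta> m < 0)"

definition exits_up_by :: "real \<Rightarrow> nat \<Rightarrow> (nat \<Rightarrow> real) \<Rightarrow> bool" where
  "exits_up_by \<theta> n w \<longleftrightarrow>
     (\<exists>k. 1 \<le> k \<and> k \<le> n \<and> 1 \<le> walk w \<theta> k \<and>
        (\<forall>m. 1 \<le> m \<and> m < k \<longrightarrow> 0 \<le> walk w \<theta> m \<and> walk w \<theta> m < 1))"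

lemma exits_up_iff_exits_up_by: "exits_up \<theta> w \<longleftrightarrow> (\<exists>n. exits_up_by \<theta> n w)"
  unfolding exits_up_def exits_up_by_def by auto

lemma hits_below_0 [simp]: "\<not> hits_below \<theta> 0 w"
  and exits_up_by_0 [simp]: "\<not> exits_up_by \<theta> 0 w"
  by (auto simp: hits_below_def exits_up_by_def)

lemma hits_below_mono: "hits_below \<theta> m w \<Longrightarrow> m \<le> n \<Longrightarrow> hits_below \<theta> n w"
  and exits_up_by_mono: "exits_up_by \<theta> m w \<Longrightarrow> m \<le> n \<Longrightarrow> exits_up_by \<theta> n w"
  unfolding hits_below_def exits_up_by_def by (meson order_trans)+

lemma walk_Suc: "walk w \<theta> (Suc n) = walk w \<theta> n + (w n - \<theta>)"
  by (simp add: walk_def algebra_simps)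

lemma walk_cong: "(\<And>i. i < n \<Longrightarrow> w i = w' i) \<Longrightarrow> walk w \<theta> n = walk w' \<theta> n"
  by (simp add: walk_def)

lemma walk_fun_upd: "m \<le> n \<Longrightarrow> walk (w(n := y)) \<theta> m = walk w \<theta> m"
  by (rule walk_cong) auto

lemma hits_below_cong:
  "(\<And>m. m \<le> n \<Longrightarrow> walk w \<theta> m = walk w' \<theta> m) \<Longrightarrow> hits_below \<theta> n w = hits_below \<theta> n w'"
  unfolding hits_below_def by auto

lemma exits_up_by_cong:
  assumes "\<And>m. m \<le> n \<Longrightarrow> walk w \<theta> m = walk w' \<theta> m"
  shows "exits_up_by \<theta> n w = exits_up_by \<theta> n w'"
proof -
  have "(\<forall>m. 1 \<le> m \<and> m < k \<longrightarrow> 0 \<le> walk w \<theta> m \<and> walk w \<theta> m < 1) \<longleftrightarrow>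
        (\<forall>m. 1 \<le> m \<and> m < k \<longrightarrow> 0 \<le> walk w' \<theta> m \<and> walk w' \<theta> m < 1)" if "k \<le> n" for k
    using assms that by (metis less_imp_le order_trans)
  then show ?thesis
    unfolding exits_up_by_def by (intro ex_cong1) (use assms in auto)
qed

lemma hits_below_fun_upd_Suc:
  "hits_below \<theta> (Suc n) (w(n := y)) \<longleftrightarrow> hits_below \<theta> n w \<or> walk w \<theta> n + (y - \<theta>) < 0"
  by (auto simp: hits_below_def walk_fun_upd walk_Suc le_Suc_eq)

lemma exits_up_by_Suc:
  "exits_up_by \<theta> (Suc n) w \<longleftrightarrow> exits_up_by \<theta> n w \<or>
     (1 \<le> walk w \<theta> (Suc n) \<and> (\<forall>m. 1 \<le> m \<and> m \<le> n \<longrightarrow> 0 \<le> walk w \<theta> m \<and> walk w \<theta> m < 1))"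
  unfolding exits_up_by_def
proof safe
  fix k assume "1 \<le> k" "k \<le> Suc n" "1 \<le> walk w \<theta> k"
    and inside: "\<forall>m. 1 \<le> m \<and> m < k \<longrightarrow> 0 \<le> walk w \<theta> m \<and> walk w \<theta> m < 1"
    and "\<not> (\<exists>k\<ge>1. k \<le> n \<and> 1 \<le> walk w \<theta> k \<and>
      (\<forall>m. 1 \<le> m \<and> m < k \<longrightarrow> 0 \<le> walk w \<theta> m \<and> walk w \<theta> m < 1))"
  then have "k = Suc n"
    using le_Suc_eq by blast
  then show "1 \<le> walk w \<theta> (Suc n)" "\<And>m. 1 \<le> m \<Longrightarrow> m \<le> n \<Longrightarrow> 0 \<le> walk w \<theta> m"
    "\<And>m. 1 \<le> m \<Longrightarrow> m \<le> n \<Longrightarrow> walk w \<theta> m < 1"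
    using \<open>1 \<le> walk w \<theta> k\<close> inside by auto
qed (use le_SucI in blast, force)

lemma exits_up_by_fun_upd_Suc:
  "exits_up_by \<theta> (Suc n) (w(n := y)) \<longleftrightarrow> exits_up_by \<theta> n w \<or>
     (1 \<le> walk w \<theta> n + (y - \<theta>) \<and> (\<forall>m. 1 \<le> m \<and> m \<le> n \<longrightarrow> 0 \<le> walk w \<theta> m \<and> walk w \<theta> m < 1))"
  using exits_up_by_Suc[of \<theta> n "w(n := y)"] exits_up_by_cong[of n "w(n := y)" \<theta> w]
  by (simp add: walk_fun_upd walk_Suc)

lemma walk_restrict: "m \<le> n \<Longrightarrow> walk (restrict w {..<n}) \<theta> m = walk w \<theta> m"
  by (rule walk_cong) auto

lemma ex_hits_below_iff: "(\<exists>N. hits_below \<theta> N w) \<longleftrightarrow> (\<exists>n\<ge>1. walk w \<theta> n < 0)"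
  by (auto simp: hits_below_def)

locale subgaussian_walk =
  fixes Q :: "real measure" and mu \<delta> :: real
  assumes subgaussian: "subgaussian_mean Q mu" and delta_pos: "0 < \<delta>"
begin

abbreviation \<theta> :: real where "\<theta> \<equiv> mu - \<delta>"

sublocale prob_space Q
  using subgaussian by (simp add: subgaussian_mean_def)

sublocale iid: product_prob_space "\<lambda>_::nat. Q" UNIV ..

lemma sets_Q [measurable_cong]: "sets Q = sets borel"
  using subgaussian by (simp add: subgaussian_mean_def)

lemma integrable_exp_centered: "integrable Q (\<lambda>x. exp (s * (x - mu)))"
  and integral_exp_centered_le: "(\<integral>x. exp (s * (x - mu)) \<partial>Q) \<le> exp (s\<^sup>2 / 2)"
  using subgaussian by (auto simp: subgaussian_mean_def)

lemma measurable_coordinate: "(\<lambda>w. w i) \<in> borel_measurable (PiM I (\<lambda>_. Q))"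
proof (cases "i \<in> I")
  case False
  then have "(\<lambda>w. w i) \<in> borel_measurable (PiM I (\<lambda>_. Q)) \<longleftrightarrow> (\<lambda>w. undefined :: real) \<in> borel_measurable (PiM I (\<lambda>_. Q))"
    by (intro measurable_cong) (auto simp: space_PiM PiE_def extensional_def)
  then show ?thesis
    by simp
qed (use measurable_component_singleton[of i I "\<lambda>_. Q"] in \<open>simp add: measurable_cong_sets[OF refl sets_Q]\<close>)

lemma measurable_walk [measurable]: "(\<lambda>w. walk w \<theta> n) \<in> borel_measurable (PiM I (\<lambda>_. Q))"
  unfolding walk_def by (intro borel_measurable_diff borel_measurable_sum measurable_coordinate) simp

lemma pred_hits_below [measurable]: "Measurable.pred (PiM I (\<lambda>_. Q)) (hits_below \<theta> n)"
  unfolding hits_below_def by measurable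

lemma pred_exits_up_by [measurable]: "Measurable.pred (PiM I (\<lambda>_. Q)) (exits_up_by \<theta> n)"
  unfolding exits_up_by_def by measurable

lemma nn_integral_min_exp_step:
  "(\<integral>\<^sup>+y. ennreal (min 1 (exp (- 2 * \<delta> * (r + (y - \<theta>))))) \<partial>Q) \<le> ennreal (min 1 (exp (- 2 * \<delta> * r)))"
proof -
  define Z where "Z y = exp (- 2 * \<delta> * r - 2 * \<delta>\<^sup>2) * exp ((- 2 * \<delta>) * (y - mu))" for y
  have Z_eq: "exp (- 2 * \<delta> * (r + (y - \<theta>))) = Z y" for y
    by (simp add: Z_def exp_add[symmetric] algebra_simps power2_eq_square)
  have Z_int: "integrable Q Z"
    unfolding Z_def by (intro integrable_mult_right integrable_exp_centered)
  \<comment> \<open>The drift \<open>\<delta>\<close> of the walk exactly cancels the subgaussian factor \<open>exp (2 * \<delta>\<^sup>2)\<close>.\<close>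
  have "(\<integral>y. Z y \<partial>Q) \<le> exp (- 2 * \<delta> * r - 2 * \<delta>\<^sup>2) * exp ((- 2 * \<delta>)\<^sup>2 / 2)"
    unfolding Z_def integral_mult_right_zero by (intro mult_left_mono integral_exp_centered_le) simp
  also have "\<dots> = exp (- 2 * \<delta> * r)"
    by (simp add: exp_add[symmetric] power2_eq_square)
  finally have Z_le: "(\<integral>y. Z y \<partial>Q) \<le> exp (- 2 * \<delta> * r)" .
  have "(\<integral>\<^sup>+y. ennreal (min 1 (exp (- 2 * \<delta> * (r + (y - \<theta>))))) \<partial>Q) \<le> (\<integral>\<^sup>+y. ennreal (Z y) \<partial>Q)"
    unfolding Z_eq by (intro nn_integral_mono ennreal_leI min.cobounded2)
  also have "\<dots> = ennreal (\<integral>y. Z y \<partial>Q)"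
    by (intro nn_integral_eq_integral Z_int) (simp add: Z_def)
  finally have "(\<integral>\<^sup>+y. ennreal (min 1 (exp (- 2 * \<delta> * (r + (y - \<theta>))))) \<partial>Q) \<le> exp (- 2 * \<delta> * r)"
    using Z_le by (simp add: order_trans)
  moreover have "(\<integral>\<^sup>+y. ennreal (min 1 (exp (- 2 * \<delta> * (r + (y - \<theta>))))) \<partial>Q) \<le> 1"
    using nn_integral_mono[of Q _ "\<lambda>_. 1"] by (simp add: emeasure_space_1)
  ultimately show ?thesis
    by (simp add: min_def)
qed

definition stopped_exp :: "nat \<Rightarrow> (nat \<Rightarrow> real) \<Rightarrow> real" where
  "stopped_exp n w = (if hits_below \<theta> n w then 1 else min 1 (exp (- 2 * \<delta> * walk w \<theta> n)))"

definition exit_weight :: "nat \<Rightarrow> (nat \<Rightarrow> real) \<Rightarrow> real" where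
  "exit_weight n w = (if exits_up_by \<theta> n w then stopped_exp n w + (1 - exp (- 2 * \<delta>)) else 1)"

lemma stopped_exp_nonneg: "0 \<le> stopped_exp n w"
  by (simp add: stopped_exp_def)

lemma measurable_stopped_exp [measurable]: "stopped_exp n \<in> borel_measurable (PiM I (\<lambda>_. Q))"
  unfolding stopped_exp_def by measurable

lemma measurable_exit_weight [measurable]: "exit_weight n \<in> borel_measurable (PiM I (\<lambda>_. Q))"
  unfolding exit_weight_def by measurable

lemma stopped_exp_fun_upd_Suc:
  "stopped_exp (Suc n) (w(n := y)) =
     (if hits_below \<theta> n w then 1 else min 1 (exp (- 2 * \<delta> * (walk w \<theta> n + (y - \<theta>)))))"
  using delta_pos
  by (auto simp: stopped_exp_def hits_below_fun_upd_Suc walk_fun_upd walk_Suc mult_pos_neg)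

lemma stopped_exp_step:
  "(\<integral>\<^sup>+y. ennreal (stopped_exp (Suc n) (w(n := y))) \<partial>Q) \<le> ennreal (stopped_exp n w)"
  using nn_integral_min_exp_step[of "walk w \<theta> n"]
  by (simp add: stopped_exp_fun_upd_Suc) (simp add: stopped_exp_def emeasure_space_1)


lemma exit_weight_step:
  "(\<integral>\<^sup>+y. ennreal (exit_weight (Suc n) (w(n := y))) \<partial>Q) \<le> ennreal (exit_weight n w)"
proof -
  define c where "c = 1 - exp (- 2 * \<delta>)"
  have c_nonneg: "0 \<le> c"
    using delta_pos by (simp add: c_def)
  consider (up) "exits_up_by \<theta> n w" | (below) "hits_below \<theta> n w" "\<not> exits_up_by \<theta> n w"
    | (strip) "\<not> hits_below \<theta> n w" "\<not> exits_up_by \<theta> n w"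
    by blast
  then show ?thesis
  proof cases
    case up
    then have "(\<integral>\<^sup>+y. ennreal (exit_weight (Suc n) (w(n := y))) \<partial>Q)
        = (\<integral>\<^sup>+y. ennreal (stopped_exp (Suc n) (w(n := y))) + c \<partial>Q)"
      using c_nonneg by (simp add: exit_weight_def exits_up_by_fun_upd_Suc stopped_exp_nonneg c_def ennreal_plus)
    also have "\<dots> = (\<integral>\<^sup>+y. ennreal (stopped_exp (Suc n) (w(n := y))) \<partial>Q) + c"
    proof (subst nn_integral_add)
      have "(\<lambda>y. ennreal (min 1 (exp (- 2 * \<delta> * (r + (y - \<theta>)))))) \<in> borel_measurable Q" for r
        by measurable
      then show "(\<lambda>y. ennreal (stopped_exp (Suc n) (w(n := y)))) \<in> borel_measurable Q"
        unfolding stopped_exp_fun_upd_Suc by (cases "hits_below \<theta> n w") simp_all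
    qed (simp_all add: emeasure_space_1)
    also have "\<dots> \<le> ennreal (stopped_exp n w) + ennreal c"
      using stopped_exp_step by (rule add_right_mono)
    also have "\<dots> = exit_weight n w"
      using up c_nonneg by (simp add: exit_weight_def stopped_exp_nonneg c_def ennreal_plus)
    finally show ?thesis .
  next
    case below
    then have "exit_weight (Suc n) (w(n := y)) = 1" for y
      by (auto simp: exit_weight_def exits_up_by_fun_upd_Suc hits_below_def not_le)
    then show ?thesis
      using below by (simp add: exit_weight_def emeasure_space_1)
  next
    case strip
    have "exit_weight (Suc n) (w(n := y)) \<le> 1" for y
    proof (cases "exits_up_by \<theta> (Suc n) (w(n := y))")
      case True
      then have "1 \<le> walk w \<theta> n + (y - \<theta>)"
        using strip by (simp add: exits_up_by_fun_upd_Suc)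
      then have "exp (- 2 * \<delta> * (walk w \<theta> n + (y - \<theta>))) \<le> exp (- 2 * \<delta>)"
        using delta_pos by simp
      then have "min 1 (exp (- 2 * \<delta> * (walk w \<theta> n + (y - \<theta>)))) + (1 - exp (- 2 * \<delta>)) \<le> 1"
        by linarith
      then show ?thesis
        using True strip by (simp add: exit_weight_def stopped_exp_fun_upd_Suc)
    qed (simp add: exit_weight_def)
    then have "(\<integral>\<^sup>+y. ennreal (exit_weight (Suc n) (w(n := y))) \<partial>Q) \<le> (\<integral>\<^sup>+y. 1 \<partial>Q)"
      by (intro nn_integral_mono) simp
    then show ?thesis
      using strip by (simp add: exit_weight_def emeasure_space_1)
  qed
qed

lemma nn_integral_exit_weight_le: "(\<integral>\<^sup>+w. ennreal (exit_weight N w) \<partial>PiM {..<N} (\<lambda>_. Q)) \<le> 1"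
proof -
  interpret P0: prob_space "PiM {} (\<lambda>_::nat. Q)"
    by (intro prob_space_PiM prob_space_axioms)
  have "(\<integral>\<^sup>+w. ennreal (exit_weight N w) \<partial>PiM {..<N} (\<lambda>_. Q))
      \<le> (\<integral>\<^sup>+w. ennreal (exit_weight 0 w) \<partial>PiM {..<0} (\<lambda>_. Q))"
    by (intro nn_integral_PiM_supermartingale exit_weight_step) auto
  also have "\<dots> = 1"
    by (simp add: exit_weight_def P0.emeasure_space_1)
  finally show ?thesis .
qed

lemma nn_integral_stopped_exp_le:
  assumes "1 \<le> N"
  shows "(\<integral>\<^sup>+w. ennreal (stopped_exp N w) \<partial>PiM {..<N} (\<lambda>_. Q))
    \<le> ennreal (\<integral>y. min 1 (exp (- 2 * \<delta> * (y - \<theta>))) \<partial>Q)"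
proof -
  have stopped_exp_1: "stopped_exp 1 w = min 1 (exp (- 2 * \<delta> * (w 0 - \<theta>)))" for w
    using stopped_exp_fun_upd_Suc[of 0 w "w 0"] by (simp add: walk_def)
  have "(\<integral>\<^sup>+w. ennreal (stopped_exp N w) \<partial>PiM {..<N} (\<lambda>_. Q))
      \<le> (\<integral>\<^sup>+w. ennreal (stopped_exp 1 w) \<partial>PiM {..<1} (\<lambda>_. Q))"
    using assms by (intro nn_integral_PiM_supermartingale stopped_exp_step) auto
  also have "\<dots> = (\<integral>\<^sup>+y. ennreal (min 1 (exp (- 2 * \<delta> * (y - \<theta>)))) \<partial>Q)"
  proof -
    have "{..<1::nat} = {0}"
      by auto
    moreover have "(\<lambda>y. ennreal (min 1 (exp (- 2 * \<delta> * (y - \<theta>))))) \<in> borel_measurable Q"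
      by measurable
    ultimately show ?thesis
      unfolding stopped_exp_1
      using iid.product_nn_integral_singleton[where f="\<lambda>y. ennreal (min 1 (exp (- 2 * \<delta> * (y - \<theta>))))" and i=0]
      by simp
  qed
  also have "\<dots> = ennreal (\<integral>y. min 1 (exp (- 2 * \<delta> * (y - \<theta>))) \<partial>Q)"
    by (intro nn_integral_eq_integral integrable_const_bound[where B=1]) auto
  finally show ?thesis .
qed

lemma measure_hits_below_le_integral:
  "measure (PiM {..<N} (\<lambda>_. Q)) {w \<in> space (PiM {..<N} (\<lambda>_. Q)). hits_below \<theta> N w}
    \<le> (\<integral>y. min 1 (exp (- 2 * \<delta> * (y - \<theta>))) \<partial>Q)"
proof (cases "N = 0")
  case False
  let ?P = "PiM {..<N} (\<lambda>_. Q)"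
  interpret P: prob_space ?P
    by (intro prob_space_PiM prob_space_axioms)
  have "emeasure ?P {w \<in> space ?P. hits_below \<theta> N w} = (\<integral>\<^sup>+w. indicator {w \<in> space ?P. hits_below \<theta> N w} w \<partial>?P)"
    by simp
  also have "\<dots> \<le> (\<integral>\<^sup>+w. ennreal (stopped_exp N w) \<partial>?P)"
    by (intro nn_integral_mono) (simp add: stopped_exp_def indicator_def)
  also have "\<dots> \<le> ennreal (\<integral>y. min 1 (exp (- 2 * \<delta> * (y - \<theta>))) \<partial>Q)"
    using False by (intro nn_integral_stopped_exp_le) simp
  finally show ?thesis
    by (simp add: P.emeasure_eq_measure ennreal_le_iff)
qed simp

lemma measure_hits_below_add_exits_up_by_le:
  "measure (PiM {..<N} (\<lambda>_. Q)) {w \<in> space (PiM {..<N} (\<lambda>_. Q)). hits_below \<theta> N w}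
   + (1 - exp (- 2 * \<delta>)) * measure (PiM {..<N} (\<lambda>_. Q)) {w \<in> space (PiM {..<N} (\<lambda>_. Q)). exits_up_by \<theta> N w}
   \<le> 1"
proof -
  let ?P = "PiM {..<N} (\<lambda>_. Q)"
  interpret P: prob_space ?P
    by (intro prob_space_PiM prob_space_axioms)
  define A where "A = {w \<in> space ?P. hits_below \<theta> N w}"
  define B where "B = {w \<in> space ?P. exits_up_by \<theta> N w}"
  define c where "c = 1 - exp (- 2 * \<delta>)"
  have c_nonneg: "0 \<le> c"
    using delta_pos by (simp add: c_def)
  have [measurable]: "A \<in> sets ?P" "B \<in> sets ?P"
    unfolding A_def B_def by measurable
  have "emeasure ?P A + c * emeasure ?P B = (\<integral>\<^sup>+w. indicator A w + ennreal c * indicator B w \<partial>?P)"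
    by (simp add: nn_integral_add nn_integral_cmult)
  also have "\<dots> = (\<integral>\<^sup>+w. ennreal (indicator A w + c * indicator B w) \<partial>?P)"
    using c_nonneg by (intro nn_integral_cong) (auto simp: indicator_def)
  also have "\<dots> \<le> (\<integral>\<^sup>+w. ennreal (exit_weight N w) \<partial>?P)"
    using c_nonneg
    by (intro nn_integral_mono ennreal_leI)
       (auto simp: exit_weight_def stopped_exp_def indicator_def A_def B_def c_def)
  also have "\<dots> \<le> 1"
    by (rule nn_integral_exit_weight_le)
  finally have "ennreal (measure ?P A + c * measure ?P B) \<le> 1"
    using c_nonneg by (simp add: P.emeasure_eq_measure ennreal_mult ennreal_plus)
  then show ?thesis
    unfolding A_def B_def c_def by simp
qed

lemma integral_min_exp_le:
  assumes small: "\<delta> \<le> 0.05" and p0: "p0 \<le> (\<integral>x. (x - \<theta>) * indicator {\<theta>..} x \<partial>Q)"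
  shows "(\<integral>y. min 1 (exp (- 2 * \<delta> * (y - \<theta>))) \<partial>Q) \<le> 1 - p0 * \<delta> / 4"
proof -
  define h where "h = (\<lambda>x. (x - \<theta>) * indicator {\<theta>..} x)"
  define E where "E = exp (\<delta> - 3 / (4 * \<delta>) - 1)"
  have int_id: "integrable Q (\<lambda>x. x)" and mean: "(\<integral>x. x \<partial>Q) = mu"
    using subgaussian by (auto simp: subgaussian_mean_def)
  have int_h: "integrable Q h"
    unfolding h_def by (intro integrable_real_mult_indicator Bochner_Integration.integrable_diff int_id) auto
  have int_min: "integrable Q (\<lambda>y. min 1 (exp (- 2 * \<delta> * (y - \<theta>))))"
    by (intro integrable_const_bound[where B=1]) auto
  have "\<delta> = (\<integral>x. x - \<theta> \<partial>Q)"
    using int_id mean by (simp add: prob_space)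
  also have "\<dots> \<le> integral\<^sup>L Q h"
    using int_id int_h by (intro integral_mono) (auto simp: h_def indicator_def)
  finally have delta_le: "\<delta> \<le> integral\<^sup>L Q h" .
  have "(\<integral>y. exp (1 * (y - mu)) \<partial>Q) * E \<le> exp (1\<^sup>2 / 2) * E"
    using integral_exp_centered_le[of 1] by (intro mult_right_mono) (auto simp: E_def)
  also have "\<dots> \<le> \<delta> / 2"
    using exp_tail_le_half[OF delta_pos small] by (simp add: E_def mult.commute exp_add[symmetric])
  finally have tail: "(\<integral>y. exp (1 * (y - mu)) \<partial>Q) * E \<le> \<delta> / 2" .
  have pointwise: "\<delta> / 2 * (h y - exp (1 * (y - mu)) * E) \<le> 1 - min 1 (exp (- 2 * \<delta> * (y - \<theta>)))" for y
  proof -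
    have "h y = max 0 (y - \<theta>)" and "exp (1 * (y - mu)) * E = exp (y - \<theta> - 3 / (4 * \<delta>) - 1)"
      by (auto simp: h_def indicator_def E_def exp_add[symmetric])
    then show ?thesis
      using min_one_exp_gain_ge[OF delta_pos, of "y - \<theta>"] by simp
  qed
  have "\<delta> / 2 * (integral\<^sup>L Q h - \<delta> / 2) \<le> \<delta> / 2 * (integral\<^sup>L Q h - (\<integral>y. exp (1 * (y - mu)) \<partial>Q) * E)"
    using tail delta_pos by (intro mult_left_mono) auto
  also have "\<dots> = (\<integral>y. \<delta> / 2 * (h y - exp (1 * (y - mu)) * E) \<partial>Q)"
    using int_h integrable_exp_centered[of 1] by simp
  also have "\<dots> \<le> (\<integral>y. 1 - min 1 (exp (- 2 * \<delta> * (y - \<theta>))) \<partial>Q)"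
    using int_h integrable_exp_centered[of 1] int_min pointwise by (intro integral_mono) auto
  also have "\<dots> = 1 - (\<integral>y. min 1 (exp (- 2 * \<delta> * (y - \<theta>))) \<partial>Q)"
    using int_min by (simp add: prob_space)
  finally have "\<delta> / 2 * (integral\<^sup>L Q h - \<delta> / 2) \<le> 1 - (\<integral>y. min 1 (exp (- 2 * \<delta> * (y - \<theta>))) \<partial>Q)" .
  moreover have "p0 * \<delta> / 4 \<le> \<delta> / 2 * (integral\<^sup>L Q h - \<delta> / 2)"
  proof -
    have "p0 / 2 \<le> integral\<^sup>L Q h - \<delta> / 2"
      using p0 delta_le by (simp add: h_def)
    then show ?thesis
      using mult_left_mono[of "p0 / 2" _ "\<delta> / 2"] delta_pos by simp
  qed
  ultimately show ?thesis
    by linarith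
qed

lemma measure_iid_hits_below:
  "measure (iid_space Q) {w \<in> space (iid_space Q). hits_below \<theta> N w}
    = measure (PiM {..<N} (\<lambda>_. Q)) {w \<in> space (PiM {..<N} (\<lambda>_. Q)). hits_below \<theta> N w}"
  unfolding iid_space_def
  by (intro iid.measure_PiM_Collect_finite_support hits_below_cong) (auto simp: walk_restrict)

lemma measure_iid_exits_up_by:
  "measure (iid_space Q) {w \<in> space (iid_space Q). exits_up_by \<theta> N w}
    = measure (PiM {..<N} (\<lambda>_. Q)) {w \<in> space (PiM {..<N} (\<lambda>_. Q)). exits_up_by \<theta> N w}"
  unfolding iid_space_def
  by (intro iid.measure_PiM_Collect_finite_support exits_up_by_cong) (auto simp: walk_restrict)

lemma LIMSEQ_measure_iid_hits_below:
  "(\<lambda>N. measure (iid_space Q) {w \<in> space (iid_space Q). hits_below \<theta> N w})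
    \<longlonglongrightarrow> measure (iid_space Q) {w \<in> space (iid_space Q). \<exists>N. hits_below \<theta> N w}"
  unfolding iid_space_def by (intro iid.measure_Collect_ex_LIMSEQ) (auto elim: hits_below_mono)

lemma LIMSEQ_measure_iid_exits_up_by:
  "(\<lambda>N. measure (iid_space Q) {w \<in> space (iid_space Q). exits_up_by \<theta> N w})
    \<longlonglongrightarrow> measure (iid_space Q) {w \<in> space (iid_space Q). exits_up \<theta> w}"
  unfolding iid_space_def exits_up_iff_exits_up_by
  by (intro iid.measure_Collect_ex_LIMSEQ) (auto elim: exits_up_by_mono)

lemma measure_iid_ever_below_le_integral:
  "measure (iid_space Q) {w \<in> space (iid_space Q). \<exists>N. hits_below \<theta> N w}
    \<le> (\<integral>y. min 1 (exp (- 2 * \<delta> * (y - \<theta>))) \<partial>Q)"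
  using LIMSEQ_measure_iid_hits_below
  by (rule LIMSEQ_le_const2) (use measure_hits_below_le_integral in \<open>auto simp: measure_iid_hits_below\<close>)

lemma measure_iid_ever_below_le_exits_up:
  "measure (iid_space Q) {w \<in> space (iid_space Q). \<exists>N. hits_below \<theta> N w}
    \<le> 1 - (1 - exp (- 2 * \<delta>)) * measure (iid_space Q) {w \<in> space (iid_space Q). exits_up \<theta> w}"
proof (rule LIMSEQ_le[OF LIMSEQ_measure_iid_hits_below])
  show "(\<lambda>N. 1 - (1 - exp (- 2 * \<delta>)) * measure (iid_space Q) {w \<in> space (iid_space Q). exits_up_by \<theta> N w})
    \<longlonglongrightarrow> 1 - (1 - exp (- 2 * \<delta>)) * measure (iid_space Q) {w \<in> space (iid_space Q). exits_up \<theta> w}"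
    by (intro tendsto_intros LIMSEQ_measure_iid_exits_up_by)
  show "\<exists>N0. \<forall>N\<ge>N0. measure (iid_space Q) {w \<in> space (iid_space Q). hits_below \<theta> N w}
      \<le> 1 - (1 - exp (- 2 * \<delta>)) * measure (iid_space Q) {w \<in> space (iid_space Q). exits_up_by \<theta> N w}"
    using measure_hits_below_add_exits_up_by_le
    by (simp add: measure_iid_hits_below measure_iid_exits_up_by algebra_simps)
qed

lemma measure_iid_ever_below_le:
  assumes "upward_looking Q mu p0" "0 \<le> p0" "\<delta> \<le> 0.05"
  shows "measure (iid_space Q) {w \<in> space (iid_space Q). \<exists>N. hits_below \<theta> N w} \<le> exp (- p0 * \<delta> / 4)"
proof -
  consider (exits_up) "p0 \<le> measure (iid_space Q) {w \<in> space (iid_space Q). exits_up \<theta> w}"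
    | (overshoot) "p0 \<le> (\<integral>x. (x - \<theta>) * indicator {\<theta>..} x \<partial>Q)"
    using assms(1) delta_pos unfolding upward_looking_def by (auto dest: spec[of _ \<theta>])
  then have "measure (iid_space Q) {w \<in> space (iid_space Q). \<exists>N. hits_below \<theta> N w} \<le> 1 - p0 * \<delta> / 4"
  proof cases
    case exits_up
    moreover have "\<delta> / 4 \<le> 1 - exp (- 2 * \<delta>)"
    proof -
      have "\<delta> / 4 \<le> 2 * \<delta> / (1 + 2 * \<delta>)"
        using delta_pos assms(3) by (simp add: field_simps)
      then show ?thesis
        using one_minus_exp_neg_ge[of "2 * \<delta>"] delta_pos by simp
    qed
    ultimately have "\<delta> / 4 * p0 \<le> (1 - exp (- 2 * \<delta>)) * measure (iid_space Q) {w \<in> space (iid_space Q). exits_up \<theta> w}"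
      using assms(2) delta_pos by (intro mult_mono) auto
    then show ?thesis
      using measure_iid_ever_below_le_exits_up by (simp add: mult.commute)
  next
    case overshoot
    show ?thesis
      using measure_iid_ever_below_le_integral integral_min_exp_le[OF assms(3) overshoot]
      by (rule order_trans)
  qed
  also have "\<dots> \<le> exp (- p0 * \<delta> / 4)"
    using exp_ge_add_one_self[of "- p0 * \<delta> / 4"] by simp
  finally show ?thesis .
qed

end

theorem lemma3:
  fixes Q :: "real measure" and mu p0 \<delta> :: real
    and M :: "'a measure" and X :: "nat \<Rightarrow> 'a \<Rightarrow> real"
  assumes "upward_looking Q mu p0"
    and "0 \<le> p0"
    and "prob_space M"
    and "\<And>i. X i \<in> borel_measurable M"
    and "prob_space.indep_vars M (\<lambda>_. borel) X UNIV"
    and "\<And>i. distr M borel (X i) = Q"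
    and "\<delta> \<le> 0.05"
  shows "measure M {\<omega> \<in> space M. \<exists>n\<ge>1. (\<Sum>i<n. X i \<omega>) / real n < mu - \<delta>}
           \<le> exp (- p0 * \<delta> / 4)"
proof (cases "0 < \<delta>")
  case True
  interpret M: prob_space M by fact
  interpret subgaussian_walk Q mu \<delta>
    using assms(1) True by unfold_locales (simp add: upward_looking_def)
  have "(\<Sum>i<n. X i \<omega>) / real n < mu - \<delta> \<longleftrightarrow> walk (\<lambda>i. X i \<omega>) \<theta> n < 0" if "1 \<le> n" for n \<omega>
    using that by (simp add: walk_def pos_divide_less_eq mult.commute)
  then have "{\<omega> \<in> space M. \<exists>n\<ge>1. (\<Sum>i<n. X i \<omega>) / real n < mu - \<delta>}
      = {\<omega> \<in> space M. \<exists>N. hits_below \<theta> N (\<lambda>i. X i \<omega>)}"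
    by (auto simp: ex_hits_below_iff)
  also have "measure M \<dots> = measure (iid_space Q) {w \<in> space (iid_space Q). \<exists>N. hits_below \<theta> N w}"
    unfolding iid_space_def by (rule M.measure_Collect_indep_vars[OF assms(5,6)]) measurable
  also have "\<dots> \<le> exp (- p0 * \<delta> / 4)"
    using assms(1,2,7) by (rule measure_iid_ever_below_le)
  finally show ?thesis .
next
  case False
  then have "1 \<le> exp (- p0 * \<delta> / 4)"
    using assms(2) by (simp add: mult_nonneg_nonpos)
  then show ?thesis
    using prob_space.prob_le_1[OF assms(3)] order_trans by blast
qed

end
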